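(* Let $I\subset\mathbb R$ be an interval and $f:I\to\mathbb R$ be $\mathcal G$-convex. Let $s$ be an interior point of $I$ at which $f$ is twice differentiable. Then $f(s)>0$ and $$f''(s)\ \ge\ \frac{1-f'(s)^2}{f(s)}.$$
   Context: $\mathcal G:=\{t\mapsto\sqrt{(t-t_0)^2+h^2}:\ t_0\in\mathbb R,\ h\ge0\}$. A function $f:I\to\mathbb R$ on an interval $I$ is $\mathcal G$-convex if for every $t_0\in I$ there is $g\in\mathcal G$ with $g(t_0)=f(t_0)$ and $g(u)\le f(u)$ for all $u\in I$. *)

theory Defs
  imports "HOL-Analysis.Analysis"
begin

definition G_fun :: "real \<Rightarrow> real \<Rightarrow> real \<Rightarrow> real" where
  "G_fun t0 h = (\<lambda>t. sqrt ((t - t0)\<^sup>2 + h\<^sup>2))"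

definition G_family :: "(real \<Rightarrow> real) set" where
  "G_family = {G_fun t0 h | t0 h. h \<ge> 0}"

definition G_convex :: "real set \<Rightarrow> (real \<Rightarrow> real) \<Rightarrow> bool" where
  "G_convex I f \<longleftrightarrow>
     (\<forall>t0\<in>I. \<exists>g\<in>G_family. g t0 = f t0 \<and> (\<forall>u\<in>I. g u \<le> f u))"

end

theory Submission
  imports Defs
begin

text \<open>At the point s the difference f - g with the touching function g of the family has a
  local minimum, so f' s = g' s and f'' s \<ge> g'' s. Every g of the family satisfies the
  differential equation g'' = (1 - g'^2) / g wherever g > 0, and g s = f s > 0 because a
  function differentiable at s cannot lie above the cone \<bar>u - s\<bar> while touching it at s.\<close>

lemma G_fun_eq_0_iff: "G_fun t0 h t = 0 \<longleftrightarrow> t = t0 \<and> h = 0"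
  by (simp add: G_fun_def add_nonneg_eq_0_iff)

lemma G_fun_nonneg: "G_fun t0 h t \<ge> 0"
  by (simp add: G_fun_def)

lemma G_fun_zero_height: "G_fun t0 0 t = \<bar>t - t0\<bar>"
  by (simp add: G_fun_def)

lemma DERIV_G_fun:
  assumes "G_fun t0 h t > 0"
  shows "(G_fun t0 h has_real_derivative (t - t0) / G_fun t0 h t) (at t)"
proof -
  have "(t - t0)\<^sup>2 + h\<^sup>2 > 0"
    using assms by (simp add: G_fun_def)
  then show ?thesis
    unfolding G_fun_def
    by (auto intro!: derivative_eq_intros simp: divide_simps)
qed

lemma DERIV_G_fun_deriv:
  assumes pos: "G_fun t0 h s > 0"
  shows "((\<lambda>t. (t - t0) / G_fun t0 h t) has_real_derivative
           (1 - ((s - t0) / G_fun t0 h s)\<^sup>2) / G_fun t0 h s) (at s)"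
  using pos
  by (auto intro!: derivative_eq_intros DERIV_G_fun simp: divide_simps power2_eq_square)

lemma eventually_G_fun_pos:
  assumes "G_fun t0 h s > 0"
  shows "\<forall>\<^sub>F t in nhds s. G_fun t0 h t > 0"
proof -
  have "isCont (G_fun t0 h) s"
    using DERIV_isCont[OF DERIV_G_fun[OF assms]] .
  then show ?thesis
    using assms order_tendstoD(1) eventually_nhds_conv_at unfolding isCont_def by blast
qed

lemma DERIV2_local_min_nonneg:
  fixes \<phi> \<phi>' :: "real \<Rightarrow> real"
  assumes der: "\<forall>\<^sub>F x in nhds s. (\<phi> has_real_derivative \<phi>' x) (at x)"
    and der2: "(\<phi>' has_real_derivative D) (at s)"
    and "e > 0" and min: "\<And>y. \<bar>y - s\<bar> < e \<Longrightarrow> \<phi> s \<le> \<phi> y"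
  shows "D \<ge> 0"
proof (rule ccontr)
  assume "\<not> D \<ge> 0"
  then obtain d where "d > 0" and dec: "\<And>k. 0 < k \<Longrightarrow> k < d \<Longrightarrow> \<phi>' (s + k) < \<phi>' s"
    using DERIV_neg_dec_right[OF der2] by (auto simp: not_le)
  obtain d' where "d' > 0" and near: "\<And>y. dist y s < d' \<Longrightarrow> (\<phi> has_real_derivative \<phi>' y) (at y)"
    using der unfolding eventually_nhds_metric by blast
  have crit: "\<phi>' s = 0"
    using DERIV_local_min[OF near[of s] \<open>e > 0\<close>] \<open>d' > 0\<close> min by (simp add: abs_minus_commute)
  define k where "k = min (min d d') e / 2"
  have k: "0 < k" "k < d" "k < d'" "k < e"
    using \<open>d > 0\<close> \<open>d' > 0\<close> \<open>e > 0\<close> unfolding k_def by auto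
  have "\<phi> (s + k) < \<phi> s"
  proof (rule DERIV_neg_imp_decreasing_open[of s "s + k" \<phi>])
    fix x assume "s < x" "x < s + k"
    then show "\<exists>y. (\<phi> has_real_derivative y) (at x) \<and> y < 0"
      using near[of x] dec[of "x - s"] k crit by (auto simp: dist_real_def)
  next
    show "continuous_on {s..s + k} \<phi>"
      using near k by (intro DERIV_atLeastAtMost_imp_continuous_on) (force simp: dist_real_def)
  qed (use k in simp)
  then show False
    using min[of "s + k"] k by simp
qed

lemma DERIV_not_above_abs:
  fixes f :: "real \<Rightarrow> real"
  assumes der: "(f has_real_derivative D) (at s)"
    and "e > 0" and above: "\<And>u. \<bar>u - s\<bar> < e \<Longrightarrow> f s + \<bar>u - s\<bar> \<le> f u"
  shows False
proof -
  have "(\<lambda>u. f u - (u - s)) s \<le> f y - (y - s)" "(\<lambda>u. f u + (u - s)) s \<le> f y + (y - s)"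
    if "\<bar>s - y\<bar> < e" for y
    using above[of y] that by (auto simp: abs_minus_commute abs_le_iff)
  moreover have "((\<lambda>u. f u - (u - s)) has_real_derivative D - 1) (at s)"
    and "((\<lambda>u. f u + (u - s)) has_real_derivative D + 1) (at s)"
    using der by (auto intro!: derivative_eq_intros)
  ultimately have "D - 1 = 0" and "D + 1 = 0"
    using DERIV_local_min \<open>e > 0\<close> by blast+
  then show False
    by simp
qed

lemma G_fun_touching_pos:
  fixes f :: "real \<Rightarrow> real"
  assumes der: "(f has_real_derivative D) (at s)" and "e > 0"
    and touch: "G_fun t0 h s = f s"
    and below: "\<And>u. \<bar>u - s\<bar> < e \<Longrightarrow> G_fun t0 h u \<le> f u"
  shows "G_fun t0 h s > 0"
proof (rule ccontr)
  assume "\<not> G_fun t0 h s > 0"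
  then have "t0 = s" "h = 0"
    using G_fun_nonneg[of t0 h s] G_fun_eq_0_iff[of t0 h s] by auto
  then have "f s + \<bar>u - s\<bar> \<le> f u" if "\<bar>u - s\<bar> < e" for u
    using below[OF that] touch G_fun_zero_height by simp
  then show False
    using DERIV_not_above_abs[OF der \<open>e > 0\<close>] by blast
qed

theorem mainTheorem17:
  fixes I :: "real set" and f f' :: "real \<Rightarrow> real" and s f2 :: real
  assumes "is_interval I"
    and "G_convex I f"
    and "s \<in> interior I"
    and "\<forall>\<^sub>F x in nhds s. (f has_real_derivative f' x) (at x)"
    and "(f' has_real_derivative f2) (at s)"
  shows "f s > 0 \<and> f2 \<ge> (1 - (f' s)\<^sup>2) / f s"
proof -
  obtain t0 h where touch: "G_fun t0 h s = f s" and below: "\<And>u. u \<in> I \<Longrightarrow> G_fun t0 h u \<le> f u"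
    using assms(2,3) interior_subset unfolding G_convex_def G_family_def by blast
  obtain e where "e > 0" and "ball s e \<subseteq> I"
    using assms(3) mem_interior by blast
  then have below_near: "\<And>u. \<bar>u - s\<bar> < e \<Longrightarrow> G_fun t0 h u \<le> f u"
    using below by (auto simp: dist_real_def subset_iff)
  let ?g = "G_fun t0 h" and ?g' = "\<lambda>t. (t - t0) / G_fun t0 h t"
  have pos: "?g s > 0"
    using G_fun_touching_pos[OF eventually_nhds_x_imp_x[OF assms(4)] \<open>e > 0\<close> touch below_near] .
  have der: "\<forall>\<^sub>F t in nhds s. ((\<lambda>t. f t - ?g t) has_real_derivative f' t - ?g' t) (at t)"
    using eventually_G_fun_pos[OF pos] assms(4)
    by eventually_elim (auto intro!: DERIV_diff DERIV_G_fun)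
  have min: "f s - ?g s \<le> f u - ?g u" if "\<bar>u - s\<bar> < e" for u
    using below_near[OF that] touch by simp
  have "f' s - ?g' s = 0"
    using DERIV_local_min[OF eventually_nhds_x_imp_x[OF der] \<open>e > 0\<close>] min
    by (simp add: abs_minus_commute)
  moreover have "f2 - (1 - (?g' s)\<^sup>2) / ?g s \<ge> 0"
    using DERIV2_local_min_nonneg[OF der DERIV_diff[OF assms(5) DERIV_G_fun_deriv[OF pos]] \<open>e > 0\<close>] min
    by simp
  ultimately show ?thesis
    using pos touch by simp
qed

end
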